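(* For all integers $q,k\ge2$ and every $\alpha\in(0,1/k)$ there exists a constant $C>0$ such that the following holds for all sufficiently large $n$. Let $M$ be any $k$-hypermatching on $[n]$ of size $m\le\alpha n$, let $0<b\le s\le n/32$ be integers, and let $B\subseteq\mathbb{Z}_q^n$. If (i) there exists a sequence of centers $\mathbf{c}$ for $M$ such that $B$ is $(M,\mathbf{c})$-restricted, and (ii) $|B|\ge q^{n-b}$, then $B$ is $(M,C,s)$-reduced.
   Context: Fourier coefficients: for $f:\mathbb{Z}_q^n\to\mathbb{C}$, $\widehat f(\mathbf{u})=q^{-n}\sum_{\mathbf{a}}f(\mathbf{a})\omega^{-\mathbf{u}^\top\mathbf{a}}$, $\omega=e^{2\pi i/q}$; $\|\mathbf{u}\|_0$ is the number of nonzero coordinates; $\mathbf{1}_B$ is the indicator of $B$. A $k$-hypermatching $M$ of size $m$ on $[n]$ is a list of pairwise disjoint ordered $k$-tuples $e_i$ of distinct elements of $[n]$, with indicator vectors $\mathbf{e}_i\in\mathbb{Z}_q^n$. Centers $\mathbf{c}=(c_1,\dots,c_m)$ with $c_i\in e_i$; listing $e_i$ as $((e_i)_1,\dots,(e_i)_{k-1},c_i)$, the folded encoding $A_{\mathbf{c}}\in\mathbb{Z}_q^{(k-1)m\times n}$ has row $(k-1)(i-1)+\ell$ ($\ell\in[k-1]$) with $1$ in column $(e_i)_\ell$, $-1$ in column $c_i$, $0$ elsewhere. $B$ is $(M,\mathbf{c})$-restricted if $B=\{\mathbf{x}:A_{\mathbf{c}}\mathbf{x}\in B_r\}$ for some $B_r\subseteq\mathbb{Z}_q^{(k-1)m}$.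 For $C>0$, $0\le s\le n$: $U_{C,s}(0)=1$, $U_{C,s}(h)=(C\sqrt{sn}/h)^{h/2}$ for $1\le h\le s$, $U_{C,s}(h)=(2q^2e^2n/h)^{h/2}$ for $h>s$. $B$ is $(M,C,s)$-reduced if: (1) $\widehat{\mathbf{1}_B}(\mathbf{u})=0$ whenever some $j$ with $u_j\neq0$ is not covered by $M$; (2) $\widehat{\mathbf{1}_B}(\mathbf{u})=0$ whenever $\langle\mathbf{u},\mathbf{e}_i\rangle\not\equiv0\pmod q$ for some edge $e_i$; (3) for every $h\in\{1,\dots,s\}$ and every $\mathbf{v}\in\mathbb{Z}_q^n$, $\sum_{\mathbf{u}:\|\mathbf{u}+\mathbf{v}\|_0=h}\frac{q^n}{|B|}|\widehat{\mathbf{1}_B}(\mathbf{u})|\le U_{C,s}(h)$. *)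

theory Defs
  imports "HOL-Analysis.Analysis"
begin

text \<open>Elements of Z_q^n are functions nat => nat with values in {0..<q} on
  the index set {0..<n} (0-based version of [n]) and value 0 outside.\<close>
definition vecs :: "nat \<Rightarrow> nat \<Rightarrow> (nat \<Rightarrow> nat) set" where
  "vecs q n = {x. (\<forall>i<n. x i < q) \<and> (\<forall>i. n \<le> i \<longrightarrow> x i = 0)}"

definition vadd :: "nat \<Rightarrow> (nat \<Rightarrow> nat) \<Rightarrow> (nat \<Rightarrow> nat) \<Rightarrow> (nat \<Rightarrow> nat)" where
  "vadd q u v = (\<lambda>i. (u i + v i) mod q)"

definition hweight :: "nat \<Rightarrow> (nat \<Rightarrow> nat) \<Rightarrow> nat" where
  "hweight n u = card {i. i < n \<and> u i \<noteq> 0}"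

definition fourier :: "nat \<Rightarrow> nat \<Rightarrow> ((nat \<Rightarrow> nat) \<Rightarrow> complex) \<Rightarrow> (nat \<Rightarrow> nat) \<Rightarrow> complex" where
  "fourier q n f u = (1 / of_nat (q ^ n)) *
     (\<Sum>a\<in>vecs q n. f a * cis (- 2 * pi * real (\<Sum>j<n. u j * a j) / real q))"

definition indic_set :: "(nat \<Rightarrow> nat) set \<Rightarrow> (nat \<Rightarrow> nat) \<Rightarrow> complex" where
  "indic_set B a = (if a \<in> B then 1 else 0)"

definition hypermatching :: "nat \<Rightarrow> nat \<Rightarrow> nat list list \<Rightarrow> bool" where
  "hypermatching k n M \<longleftrightarrow>
     (\<forall>e\<in>set M. length e = k \<and> distinct e \<and> set e \<subseteq> {..<n}) \<and>
     (\<forall>i<length M. \<forall>i'<length M. i \<noteq> i' \<longrightarrow> set (M ! i) \<inter> set (M ! i') = {})"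

definition centers :: "nat list list \<Rightarrow> nat list \<Rightarrow> bool" where
  "centers M c \<longleftrightarrow> length c = length M \<and> (\<forall>i<length M. c ! i \<in> set (M ! i))"

text \<open>Folded encoding A_c, a (k-1)m x n integer matrix (0-based rows and columns).
  Row (k-1)i + l has 1 in column (e_i)_l (the l-th non-center element of e_i,
  in the order of e_i) and -1 in column c_i.\<close>
definition fold_mat :: "nat \<Rightarrow> nat list list \<Rightarrow> nat list \<Rightarrow> nat \<Rightarrow> nat \<Rightarrow> int" where
  "fold_mat k M c r j =
     (if r < (k - 1) * length M then
        (let i = r div (k - 1); l = r mod (k - 1);
             others = filter (\<lambda>x. x \<noteq> c ! i) (M ! i)
         in (if j = others ! l then 1 else 0) - (if j = c ! i then 1 else 0))
      else 0)"

definition matvec :: "nat \<Rightarrow> nat \<Rightarrow> nat \<Rightarrow> (nat \<Rightarrow> nat \<Rightarrow> int) \<Rightarrow> (nat \<Rightarrow> nat) \<Rightarrow> (nat \<Rightarrow> nat)" where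
  "matvec q R n A x = (\<lambda>r. if r < R then nat ((\<Sum>j<n. A r j * int (x j)) mod int q) else 0)"

definition restricted :: "nat \<Rightarrow> nat \<Rightarrow> nat \<Rightarrow> nat list list \<Rightarrow> nat list \<Rightarrow> (nat \<Rightarrow> nat) set \<Rightarrow> bool" where
  "restricted q k n M c B \<longleftrightarrow>
     (\<exists>Br \<subseteq> vecs q ((k - 1) * length M).
        B = {x \<in> vecs q n. matvec q ((k - 1) * length M) n (fold_mat k M c) x \<in> Br})"

definition Ubound :: "nat \<Rightarrow> real \<Rightarrow> nat \<Rightarrow> nat \<Rightarrow> nat \<Rightarrow> real" where
  "Ubound q C s n h =
     (if h = 0 then 1
      else if h \<le> s then (C * sqrt (real s * real n) / real h) powr (real h / 2)
      else (2 * real q ^ 2 * exp 1 ^ 2 * real n / real h) powr (real h / 2))"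

definition covered :: "nat list list \<Rightarrow> nat \<Rightarrow> bool" where
  "covered M j \<longleftrightarrow> (\<exists>i<length M. j \<in> set (M ! i))"

definition reduced :: "nat \<Rightarrow> nat \<Rightarrow> nat list list \<Rightarrow> real \<Rightarrow> nat \<Rightarrow> (nat \<Rightarrow> nat) set \<Rightarrow> bool" where
  "reduced q n M C s B \<longleftrightarrow>
     (\<forall>u\<in>vecs q n. (\<exists>j<n. u j \<noteq> 0 \<and> \<not> covered M j) \<longrightarrow> fourier q n (indic_set B) u = 0) \<and>
     (\<forall>u\<in>vecs q n. (\<exists>i<length M. (\<Sum>j\<in>set (M ! i). u j) mod q \<noteq> 0)
                     \<longrightarrow> fourier q n (indic_set B) u = 0) \<and>
     (\<forall>h\<in>{1..s}. \<forall>v\<in>vecs q n.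
        (\<Sum>u\<in>{u\<in>vecs q n. hweight n (vadd q u v) = h}.
            real (q ^ n) / real (card B) * cmod (fourier q n (indic_set B) u))
        \<le> Ubound q C s n h)"

end

(*
  Every vector constant on the edges of M lies in the kernel of the folded encoding, so B is
  invariant under adding it. Translating by the indicator of an uncovered point, or of an
  edge, multiplies the Fourier coefficient at u by a q-th root of unity that is nontrivial
  exactly when u violates (1), resp. (2); such coefficients therefore vanish.

  For (3) we use the moment method. Weighting the level-h coefficients around v by their
  phases writes their l1-mass L as the average over B of a trigonometric polynomial P; by
  convexity and orthogonality L^(2r) <= q^n/|B| times the number of 2r-tuples of admissible
  frequencies whose alternating sum is zero. For such a frequency u the support of u + v has
  h coordinates; every edge is either charged (its v-sum is nonzero) and then met at least
  once, or met at least twice or not at all, and in a zero-sum tuple every neutral edge is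
  met by two members. This gives a binomial count, and choosing r h close to b together with
  |B| >= q^(n-b) yields L <= (C sqrt(s n) / h)^(h/2) with C = 64 q^(2k+1).
*)

theory Submission
  imports Defs
begin

section \<open>Characters of Z_q^n\<close>

definition character :: "nat \<Rightarrow> nat \<Rightarrow> (nat \<Rightarrow> int) \<Rightarrow> (nat \<Rightarrow> nat) \<Rightarrow> complex" where
  "character q n w x = cis (2 * pi * real_of_int (\<Sum>j<n. w j * int (x j)) / real q)"

lemma bij_betw_vecs_PiE:
  "bij_betw (\<lambda>x. restrict x {..<n}) (vecs q n) (PiE {..<n} (\<lambda>_. {..<q}))"
proof (rule bij_betw_byWitness[where f' = "\<lambda>f i. if i < n then f i else 0"])
  show "\<forall>a\<in>vecs q n. (\<lambda>i. if i < n then restrict a {..<n} i else 0) = a"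
    by (auto simp: vecs_def fun_eq_iff)
  show "\<forall>a'\<in>PiE {..<n} (\<lambda>_. {..<q}). restrict (\<lambda>i. if i < n then a' i else 0) {..<n} = a'"
    by (auto simp: PiE_def extensional_def fun_eq_iff)
  show "(\<lambda>x. restrict x {..<n}) ` vecs q n \<subseteq> PiE {..<n} (\<lambda>_. {..<q})"
    by (force simp: vecs_def PiE_iff)
  show "(\<lambda>f i. if i < n then f i else 0) ` PiE {..<n} (\<lambda>_. {..<q}) \<subseteq> vecs q n"
    by (auto simp: vecs_def PiE_def Pi_def)
qed

lemma finite_vecs [simp]: "finite (vecs q n)"
  using bij_betw_finite[OF bij_betw_vecs_PiE] by (simp add: finite_PiE)

lemma card_vecs: "card (vecs q n) = q ^ n"
  using bij_betw_same_card[OF bij_betw_vecs_PiE] by (simp add: card_PiE)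

lemma indicator_vec_in_vecs:
  "2 \<le> q \<Longrightarrow> E \<subseteq> {..<n} \<Longrightarrow> (\<lambda>i. if i \<in> E then 1 else 0) \<in> vecs q n"
  unfolding vecs_def by auto

lemma sum_mult_indicator_vec:
  fixes w :: "nat \<Rightarrow> 'a::comm_semiring_1"
  assumes "E \<subseteq> {..<n}"
  shows "(\<Sum>j<n. w j * (if j \<in> E then 1 else 0)) = (\<Sum>j\<in>E. w j)"
proof -
  have "(\<Sum>j<n. w j * (if j \<in> E then 1 else 0)) = (\<Sum>j<n. if j \<in> E then w j else 0)"
    by (rule sum.cong) auto
  also have "\<dots> = (\<Sum>j\<in>{..<n} \<inter> E. w j)"
    by (rule sum.inter_restrict[symmetric]) simp
  also have "{..<n} \<inter> E = E" using assms by blast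
  finally show ?thesis .
qed

lemma vadd_in_vecs: "0 < q \<Longrightarrow> x \<in> vecs q n \<Longrightarrow> z \<in> vecs q n \<Longrightarrow> vadd q x z \<in> vecs q n"
  by (auto simp: vecs_def vadd_def)

lemma mod_add_right_cancel_less:
  fixes a b q :: nat
  assumes "a < q" "b < q" "(a + c) mod q = (b + c) mod q"
  shows "a = b"
proof -
  have "a mod q = b mod q" using assms(3) nat_mod_eq_iff by fastforce
  then show ?thesis using assms(1,2) by simp
qed

lemma inj_on_vadd: "inj_on (\<lambda>x. vadd q x z) (vecs q n)"
proof (rule inj_onI)
  fix x y assume x: "x \<in> vecs q n" and y: "y \<in> vecs q n" and e: "vadd q x z = vadd q y z"
  show "x = y"
  proof
    fix i
    show "x i = y i"
    proof (cases "i < n")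
      case True
      then have "x i < q" "y i < q" using x y by (auto simp: vecs_def)
      moreover have "(x i + z i) mod q = (y i + z i) mod q" using e by (metis vadd_def)
      ultimately show ?thesis by (rule mod_add_right_cancel_less)
    qed (use x y in \<open>auto simp: vecs_def\<close>)
  qed
qed

lemma sum_vadd_reindex:
  assumes "A \<subseteq> vecs q n" "\<And>x. x \<in> A \<Longrightarrow> vadd q x z \<in> A"
  shows "(\<Sum>x\<in>A. f (vadd q x z)) = (\<Sum>x\<in>A. f x)"
proof -
  have fin: "finite A" using assms(1) by (rule finite_subset) simp
  have inj: "inj_on (\<lambda>x. vadd q x z) A" using inj_on_vadd inj_on_subset assms(1) by blast
  have "(\<lambda>x. vadd q x z) ` A = A"
    using endo_inj_surj[OF fin _ inj] assms(2) by blast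
  then show ?thesis using sum.reindex[OF inj, of f] by simp
qed

lemma character_vadd:
  assumes "0 < q"
  shows "character q n w (vadd q x z) = character q n w x * character q n w z"
proof -
  define K where "K = (\<Sum>j<n. w j * ((int (x j) + int (z j)) div int q))"
  have "(\<Sum>j<n. w j * int (vadd q x z j)) =
        (\<Sum>j<n. w j * int (x j) + w j * int (z j) - int q * (w j * ((int (x j) + int (z j)) div int q)))"
  proof (rule sum.cong[OF refl])
    fix j
    have mod_eq: "int ((x j + z j) mod q) = (int (x j) + int (z j)) - int q * ((int (x j) + int (z j)) div int q)"
      by (metis of_nat_add of_nat_mod minus_div_mult_eq_mod mult.commute)
    show "w j * int (vadd q x z j) = w j * int (x j) + w j * int (z j) - int q * (w j * ((int (x j) + int (z j)) div int q))"
      unfolding vadd_def mod_eq by (simp add: algebra_simps)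
  qed
  also have "\<dots> = (\<Sum>j<n. w j * int (x j)) + (\<Sum>j<n. w j * int (z j)) - int q * K"
    by (simp add: K_def sum.distrib sum_subtractf sum_distrib_left)
  finally have eq: "(\<Sum>j<n. w j * int (vadd q x z j)) = \<dots>" .
  define a where "a = 2 * pi * real_of_int (\<Sum>j<n. w j * int (x j)) / real q"
  define c where "c = 2 * pi * real_of_int (\<Sum>j<n. w j * int (z j)) / real q"
  have arg: "2 * pi * real_of_int ((\<Sum>j<n. w j * int (x j)) + (\<Sum>j<n. w j * int (z j)) - int q * K) / real q
       = a + c + 2 * pi * real_of_int (- K)"
    using assms unfolding a_def c_def by (simp add: field_simps)
  have "cis (2 * pi * real_of_int (- K)) = 1"
    by (rule cis_multiple_2pi) simp
  then have "cis (a + c + 2 * pi * real_of_int (- K)) = cis a * cis c"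
    by (simp only: cis_mult[symmetric] mult_1_right)
  then show ?thesis
    unfolding character_def eq arg by (simp only: a_def c_def)
qed

lemma character_mult: "character q n w1 x * character q n w2 x = character q n (\<lambda>j. w1 j + w2 j) x"
  unfolding character_def by (simp add: cis_mult[symmetric] distrib_right sum.distrib add_divide_distrib algebra_simps)

lemma prod_character:
  "finite I \<Longrightarrow> (\<Prod>i\<in>I. character q n (w i) x) = character q n (\<lambda>j. \<Sum>i\<in>I. w i j) x"
proof (induction I rule: finite_induct)
  case empty
  then show ?case by (simp add: character_def)
next
  case (insert a I)
  then show ?case by (simp add: character_mult)
qed

lemma cnj_character: "cnj (character q n w x) = character q n (\<lambda>j. - w j) x"
  unfolding character_def by (simp add: cis_cnj sum_negf)

lemma norm_character [simp]: "cmod (character q n w x) = 1"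
  unfolding character_def by simp

lemma cis_2pi_div_neq_1:
  assumes "0 < q" "\<not> int q dvd t"
  shows "cis (2 * pi * real_of_int t / real q) \<noteq> 1"
proof
  assume "cis (2 * pi * real_of_int t / real q) = 1"
  then have "cos (2 * pi * real_of_int t / real q) = 1" by (metis cis.simps(1) one_complex.simps(1))
  then obtain m :: int where "2 * pi * real_of_int t / real q = 2 * pi * real_of_int m"
    using cos_one_2pi_int by auto
  then have "real_of_int t = real q * real_of_int m" using assms(1) by (simp add: field_simps)
  then have "t = int q * m" by (metis of_int_eq_iff of_int_mult of_int_of_nat_eq)
  then show False using assms(2) by simp
qed

text \<open>The divisibility hypothesis says that the character is nontrivial at z, and translating
  by z multiplies the sum by that value.\<close>

lemma sum_character_eq_0:
  assumes "0 < q" "A \<subseteq> vecs q n" "\<And>x. x \<in> A \<Longrightarrow> vadd q x z \<in> A"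
    and "\<not> int q dvd (\<Sum>j<n. w j * int (z j))"
  shows "(\<Sum>x\<in>A. character q n w x) = 0"
proof -
  have "(\<Sum>x\<in>A. character q n w x) = (\<Sum>x\<in>A. character q n w (vadd q x z))"
    using sum_vadd_reindex[OF assms(2,3), of "character q n w"] by simp
  also have "\<dots> = character q n w z * (\<Sum>x\<in>A. character q n w x)"
    by (simp add: character_vadd[OF assms(1)] sum_distrib_left mult.commute)
  finally have "(\<Sum>x\<in>A. character q n w x) = character q n w z * (\<Sum>x\<in>A. character q n w x)" .
  moreover have "character q n w z \<noteq> 1"
    using cis_2pi_div_neq_1[OF assms(1,4)] by (simp add: character_def)
  ultimately show ?thesis by (metis mult_cancel_right1)
qed

lemma norm_sum_character_vecs:
  assumes "2 \<le> q"
  shows "cmod (\<Sum>x\<in>vecs q n. character q n w x) \<le> (if \<forall>j<n. int q dvd w j then real (q ^ n) else 0)"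
proof (cases "\<forall>j<n. int q dvd w j")
  case True
  have "cmod (\<Sum>x\<in>vecs q n. character q n w x) \<le> (\<Sum>x\<in>vecs q n. cmod (character q n w x))"
    by (rule norm_sum)
  then show ?thesis using True by (simp add: card_vecs)
next
  case False
  then obtain j where j: "j < n" "\<not> int q dvd w j" by blast
  let ?z = "\<lambda>i. if i = j then 1 else 0 :: nat"
  have z: "?z \<in> vecs q n" using assms j(1) unfolding vecs_def by auto
  have "(\<Sum>l<n. w l * int (?z l)) = w j"
    using j(1) by (simp add: if_distrib cong: if_cong)
  then have "(\<Sum>x\<in>vecs q n. character q n w x) = 0"
    using assms j(2) vadd_in_vecs[OF _ _ z] by (intro sum_character_eq_0[of q _ n ?z]) simp_all
  then show ?thesis using False by simp
qed

lemma fourier_indic_set: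
  assumes "B \<subseteq> vecs q n"
  shows "fourier q n (indic_set B) u = (\<Sum>x\<in>B. character q n (\<lambda>j. - int (u j)) x) / of_nat (q ^ n)"
proof -
  have "(\<Sum>a\<in>vecs q n. indic_set B a * cis (- 2 * pi * real (\<Sum>j<n. u j * a j) / real q))
      = (\<Sum>a\<in>vecs q n. if a \<in> B then cis (- 2 * pi * real (\<Sum>j<n. u j * a j) / real q) else 0)"
    unfolding indic_set_def by (rule sum.cong) auto
  also have "\<dots> = (\<Sum>a\<in>vecs q n \<inter> B. cis (- 2 * pi * real (\<Sum>j<n. u j * a j) / real q))"
    by (rule sum.inter_restrict[OF finite_vecs, symmetric])
  also have "vecs q n \<inter> B = B" using assms by blast
  also have "(\<Sum>a\<in>B. cis (- 2 * pi * real (\<Sum>j<n. u j * a j) / real q))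
      = (\<Sum>x\<in>B. character q n (\<lambda>j. - int (u j)) x)"
    unfolding character_def by (simp add: sum_negf)
  finally show ?thesis
    unfolding fourier_def by simp
qed

lemma fourier_indic_eq_0_if_invariant:
  assumes "2 \<le> q" "B \<subseteq> vecs q n" "\<And>x. x \<in> B \<Longrightarrow> vadd q x z \<in> B"
    and "\<not> q dvd (\<Sum>j<n. u j * z j)"
  shows "fourier q n (indic_set B) u = 0"
proof -
  have "\<not> int q dvd (\<Sum>j<n. - int (u j) * int (z j))"
    using assms(4) by (simp add: sum_negf flip: of_nat_mult of_nat_sum)
  then have "(\<Sum>x\<in>B. character q n (\<lambda>j. - int (u j)) x) = 0"
    using assms(1-3) by (intro sum_character_eq_0[of _ _ _ z]) auto
  then show ?thesis
    using assms(2) by (simp add: fourier_indic_set)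
qed

section \<open>Fourier support of restricted sets\<close>

lemma hypermatching_edge:
  "hypermatching k n M \<Longrightarrow> i < length M \<Longrightarrow> length (M ! i) = k \<and> distinct (M ! i) \<and> set (M ! i) \<subseteq> {..<n}"
  unfolding hypermatching_def by auto

lemma hypermatching_disjoint:
  "hypermatching k n M \<Longrightarrow> i < length M \<Longrightarrow> i' < length M \<Longrightarrow> i \<noteq> i' \<Longrightarrow> set (M ! i) \<inter> set (M ! i') = {}"
  unfolding hypermatching_def by auto

lemma fold_mat_row:
  assumes hm: "hypermatching k n M" and ce: "centers M c" and k: "2 \<le> k"
    and r: "r < (k - 1) * length M"
  obtains i a a' where "i < length M" "a \<in> set (M ! i)" "a' \<in> set (M ! i)"
    "\<And>j. fold_mat k M c r j = (if j = a then 1 else 0) - (if j = a' then 1 else 0)"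
proof -
  define i where "i = r div (k - 1)"
  define l where "l = r mod (k - 1)"
  define others where "others = filter (\<lambda>x. x \<noteq> c ! i) (M ! i)"
  have i: "i < length M" unfolding i_def using r k
    by (simp add: div_less_iff_less_mult mult.commute)
  have l: "l < k - 1" unfolding l_def using k by simp
  have e: "length (M ! i) = k" "distinct (M ! i)" using hypermatching_edge[OF hm i] by auto
  have c: "c ! i \<in> set (M ! i)" using ce i unfolding centers_def by auto
  have "length others = card ({x. x \<noteq> c ! i} \<inter> set (M ! i))"
    unfolding others_def using e(2) by (simp add: distinct_length_filter)
  also have "{x. x \<noteq> c ! i} \<inter> set (M ! i) = set (M ! i) - {c ! i}" by blast
  also have "card (set (M ! i) - {c ! i}) = k - 1" using c e by (simp add: distinct_card)
  finally have "others ! l \<in> set (M ! i)"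
    using nth_mem[of l others] l unfolding others_def by auto
  then show ?thesis
    using r by (intro that[OF i _ c]) (simp_all add: fold_mat_def Let_def i_def l_def others_def)
qed

text \<open>Each row of the folded encoding is the difference of two coordinates of one edge.\<close>

lemma fold_mat_mult_eq_0:
  assumes hm: "hypermatching k n M" and ce: "centers M c" and k: "2 \<le> k"
    and z: "\<And>i a b. i < length M \<Longrightarrow> a \<in> set (M ! i) \<Longrightarrow> b \<in> set (M ! i) \<Longrightarrow> z a = z b"
  shows "(\<Sum>j<n. fold_mat k M c r j * int (z j)) = 0"
proof (cases "r < (k - 1) * length M")
  case True
  obtain i a a' where i: "i < length M" and a: "a \<in> set (M ! i)" "a' \<in> set (M ! i)"
    and row: "\<And>j. fold_mat k M c r j = (if j = a then 1 else 0) - (if j = a' then 1 else 0)"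
    using fold_mat_row[OF hm ce k True] by blast
  have "a < n" "a' < n" using hypermatching_edge[OF hm i] a by auto
  then have "(\<Sum>j<n. fold_mat k M c r j * int (z j))
      = (\<Sum>j<n. if j = a then int (z j) else 0) - (\<Sum>j<n. if j = a' then int (z j) else 0)"
    unfolding row sum_subtractf[symmetric] by (intro sum.cong) auto
  also have "\<dots> = int (z a) - int (z a')" using \<open>a < n\<close> \<open>a' < n\<close> by simp
  finally show ?thesis using z[OF i a] by simp
qed (simp add: fold_mat_def)

lemma matvec_vadd:
  assumes "\<And>r. r < R \<Longrightarrow> (\<Sum>j<n. A r j * int (z j)) = 0"
  shows "matvec q R n A (vadd q x z) = matvec q R n A x"
proof
  fix r
  show "matvec q R n A (vadd q x z) r = matvec q R n A x r"
  proof (cases "r < R")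
    case True
    have "(\<Sum>j<n. A r j * int (vadd q x z j)) mod int q
        = (\<Sum>j<n. (A r j * int ((x j + z j) mod q)) mod int q) mod int q"
      unfolding vadd_def by (simp add: mod_sum_eq)
    also have "\<dots> = (\<Sum>j<n. (A r j * int (x j) + A r j * int (z j)) mod int q) mod int q"
      by (simp add: of_nat_mod mod_mult_right_eq distrib_left)
    also have "\<dots> = (\<Sum>j<n. A r j * int (x j)) mod int q"
      using assms[OF True] by (simp add: mod_sum_eq sum.distrib)
    finally show ?thesis unfolding matvec_def using True by simp
  qed (simp add: matvec_def)
qed

lemma restricted_vadd_closed:
  assumes "0 < q" "hypermatching k n M" "centers M c" "2 \<le> k" "restricted q k n M c B"
    and "\<And>i a b. i < length M \<Longrightarrow> a \<in> set (M ! i) \<Longrightarrow> b \<in> set (M ! i) \<Longrightarrow> z a = z b"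
    and "z \<in> vecs q n" "x \<in> B"
  shows "vadd q x z \<in> B"
proof -
  obtain Br where B: "B = {x \<in> vecs q n. matvec q ((k - 1) * length M) n (fold_mat k M c) x \<in> Br}"
    using assms(5) unfolding restricted_def by blast
  have "matvec q ((k - 1) * length M) n (fold_mat k M c) (vadd q x z)
      = matvec q ((k - 1) * length M) n (fold_mat k M c) x"
    using fold_mat_mult_eq_0[OF assms(2-4,6)] by (rule matvec_vadd)
  then show ?thesis using assms(1,7,8) B vadd_in_vecs by auto
qed

text \<open>The indicator of E is constant on edges, so B is invariant under adding it.\<close>

lemma fourier_restricted_eq_0:
  assumes q: "2 \<le> q" and hm: "hypermatching k n M" and ce: "centers M c" and k: "2 \<le> k"
    and res: "restricted q k n M c B" and B: "B \<subseteq> vecs q n"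
    and E: "E \<subseteq> {..<n}" "\<And>i. i < length M \<Longrightarrow> set (M ! i) \<subseteq> E \<or> set (M ! i) \<inter> E = {}"
    and u: "\<not> q dvd (\<Sum>j\<in>E. u j)"
  shows "fourier q n (indic_set B) u = 0"
proof (rule fourier_indic_eq_0_if_invariant[OF q B])
  let ?z = "\<lambda>i. if i \<in> E then 1 else 0 :: nat"
  have z: "?z \<in> vecs q n" by (rule indicator_vec_in_vecs[OF q E(1)])
  have const: "?z a = ?z b" if "i < length M" "a \<in> set (M ! i)" "b \<in> set (M ! i)" for i a b
    using E(2)[OF that(1)] that(2,3) by auto
  show "vadd q x ?z \<in> B" if "x \<in> B" for x
    using q by (intro restricted_vadd_closed[OF _ hm ce k res const z that]) simp_all
  show "\<not> q dvd (\<Sum>j<n. u j * ?z j)"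
    using u sum_mult_indicator_vec[OF E(1), of u] by simp
qed

lemma fourier_uncovered_eq_0:
  assumes "2 \<le> q" "hypermatching k n M" "centers M c" "2 \<le> k" "restricted q k n M c B"
    and "B \<subseteq> vecs q n" "u \<in> vecs q n" "j < n" "u j \<noteq> 0" "\<not> covered M j"
  shows "fourier q n (indic_set B) u = 0"
proof (rule fourier_restricted_eq_0[OF assms(1-6), of "{j}"])
  show "\<not> q dvd (\<Sum>l\<in>{j}. u l)"
    using assms(7-9) by (auto simp: vecs_def dest: nat_dvd_not_less)
qed (use assms(8,10) in \<open>auto simp: covered_def\<close>)

lemma fourier_edge_sum_eq_0:
  assumes "2 \<le> q" "hypermatching k n M" "centers M c" "2 \<le> k" "restricted q k n M c B"
    and "B \<subseteq> vecs q n" "i < length M" "(\<Sum>j\<in>set (M ! i). u j) mod q \<noteq> 0"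
  shows "fourier q n (indic_set B) u = 0"
proof (rule fourier_restricted_eq_0[OF assms(1-6), of "set (M ! i)"])
  show "set (M ! i) \<subseteq> {..<n}" using hypermatching_edge[OF assms(2,7)] by blast
  show "set (M ! i') \<subseteq> set (M ! i) \<or> set (M ! i') \<inter> set (M ! i) = {}" if "i' < length M" for i'
    using hypermatching_disjoint[OF assms(2) that assms(7)] by (cases "i' = i") auto
  show "\<not> q dvd (\<Sum>j\<in>set (M ! i). u j)"
    using assms(8) by (simp add: dvd_eq_mod_eq_0)
qed

section \<open>The moment method\<close>

lemma cmod_eq_cnj_sgn_mult: "complex_of_real (cmod z) = cnj (sgn z) * z"
proof (cases "z = 0")
  case False
  have "cnj (sgn z) * z = cnj z * z / complex_of_real (cmod z)"
    by (simp add: sgn_eq)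
  also have "cnj z * z = complex_of_real ((cmod z)\<^sup>2)"
    using complex_norm_square[of z] by (simp add: mult.commute)
  finally show ?thesis using False by (simp add: power2_eq_square)
qed simp

lemma prod_lessThan_double_if:
  "(\<Prod>i<2*r. if i < r then a else b) = a ^ r * (b::'a::comm_monoid_mult) ^ r"
proof -
  have split: "{..<2*r} = {..<r} \<union> {r..<2*r}" by auto
  have "(\<Prod>i<2*r. if i < r then a else b) = (\<Prod>i<r. if i < r then a else b) * (\<Prod>i\<in>{r..<2*r}. if i < r then a else b)"
    unfolding split by (rule prod.union_disjoint) auto
  also have "(\<Prod>i<r. if i < r then a else b) = (\<Prod>i<r. a)" by (rule prod.cong) auto
  also have "(\<Prod>i\<in>{r..<2*r}. if i < r then a else b) = (\<Prod>i\<in>{r..<2*r}. b)" by (rule prod.cong) auto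
  finally show ?thesis by simp
qed

lemma power_mean_le_mean_power:
  fixes y :: "'a \<Rightarrow> real"
  assumes "finite B" "B \<noteq> {}" "even p"
  shows "((\<Sum>x\<in>B. y x) / real (card B)) ^ p \<le> (\<Sum>x\<in>B. y x ^ p) / real (card B)"
proof -
  have cB: "0 < real (card B)" using assms(1,2) by (simp add: card_gt_0_iff)
  have "(\<Sum>x\<in>B. (1 / real (card B)) *\<^sub>R y x) ^ p \<le> (\<Sum>x\<in>B. (1 / real (card B)) * y x ^ p)"
    by (rule convex_on_sum[OF assms(1,2) convex_power_even[OF assms(3)]]) (use cB in auto)
  then show ?thesis by (simp add: sum_divide_distrib)
qed

definition sign_half :: "nat \<Rightarrow> nat \<Rightarrow> int" where
  "sign_half r i = (if i < r then -1 else 1)"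

text \<open>The 2r-tuples (u_1, ..., u_r, u'_1, ..., u'_r) of elements of W with
  u'_1 + ... + u'_r - u_1 - ... - u_r = 0 in Z_q^n.\<close>

definition balanced_tuples :: "nat \<Rightarrow> nat \<Rightarrow> nat \<Rightarrow> (nat \<Rightarrow> nat) set \<Rightarrow> (nat \<Rightarrow> nat \<Rightarrow> nat) set" where
  "balanced_tuples q n r W = {t \<in> PiE {..<2*r} (\<lambda>_. W).
     \<forall>j<n. int q dvd (\<Sum>i<2*r. sign_half r i * int (t i j))}"

lemma norm_sum_character_power:
  assumes "finite W"
  shows "complex_of_real (cmod (\<Sum>u\<in>W. \<sigma> u * character q n (\<lambda>j. - int (u j)) x) ^ (2*r))
    = (\<Sum>t\<in>PiE {..<2*r} (\<lambda>_. W). (\<Prod>i<2*r. if i < r then \<sigma> (t i) else cnj (\<sigma> (t i))) *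
         character q n (\<lambda>j. \<Sum>i<2*r. sign_half r i * int (t i j)) x)"
    (is "_ = ?rhs")
proof -
  let ?P = "\<Sum>u\<in>W. \<sigma> u * character q n (\<lambda>j. - int (u j)) x"
  have "complex_of_real (cmod ?P ^ (2*r)) = (complex_of_real ((cmod ?P)\<^sup>2)) ^ r"
    by (simp add: power_mult)
  also have "\<dots> = (?P * cnj ?P) ^ r"
    by (simp only: complex_norm_square)
  also have "\<dots> = (\<Prod>i<2*r. if i < r then ?P else cnj ?P)"
    by (simp add: prod_lessThan_double_if power_mult_distrib)
  also have "\<dots> = (\<Prod>i<2*r. \<Sum>u\<in>W. (if i < r then \<sigma> u else cnj (\<sigma> u)) *
                      character q n (\<lambda>j. sign_half r i * int (u j)) x)"
    by (intro prod.cong) (auto simp: sign_half_def cnj_character)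
  also have "\<dots> = ?rhs"
    using assms by (simp add: prod_sum_PiE prod.distrib prod_character)
  finally show ?thesis .
qed

text \<open>Expanding the 2r-th power and summing over x, orthogonality of characters leaves only the
  balanced tuples.\<close>

lemma sum_norm_power_le_card_balanced_tuples:
  assumes q: "2 \<le> q" and W: "finite W" and \<sigma>: "\<And>u. cmod (\<sigma> u) \<le> 1"
  shows "(\<Sum>x\<in>vecs q n. cmod (\<Sum>u\<in>W. \<sigma> u * character q n (\<lambda>j. - int (u j)) x) ^ (2*r))
    \<le> real (q ^ n) * real (card (balanced_tuples q n r W))"
proof -
  define cf where "cf t = (\<Prod>i<2*r. if i < r then \<sigma> (t i) else cnj (\<sigma> (t i)))" for t :: "nat \<Rightarrow> nat \<Rightarrow> nat"
  define wt where "wt t = (\<lambda>j. \<Sum>i<2*r. sign_half r i * int (t i j))" for t :: "nat \<Rightarrow> nat \<Rightarrow> nat"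
  let ?T = "PiE {..<2*r} (\<lambda>_. W)"
  let ?S = "\<Sum>x\<in>vecs q n. cmod (\<Sum>u\<in>W. \<sigma> u * character q n (\<lambda>j. - int (u j)) x) ^ (2*r)"
  have "0 \<le> ?S" by (simp add: sum_nonneg)
  then have "?S = cmod (complex_of_real ?S)" by (simp only: norm_of_real abs_of_nonneg)
  also have "complex_of_real ?S = (\<Sum>t\<in>?T. cf t * (\<Sum>x\<in>vecs q n. character q n (wt t) x))"
    unfolding of_real_sum norm_sum_character_power[OF W] cf_def wt_def
    by (subst sum.swap) (simp add: sum_distrib_left)
  also have "cmod \<dots> \<le> (\<Sum>t\<in>?T. cmod (cf t) * cmod (\<Sum>x\<in>vecs q n. character q n (wt t) x))"
    by (rule order_trans[OF norm_sum]) (simp add: norm_mult)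
  also have "\<dots> \<le> (\<Sum>t\<in>?T. if t \<in> balanced_tuples q n r W then real (q ^ n) else 0)"
  proof (rule sum_mono)
    fix t assume "t \<in> ?T"
    have "cmod (cf t) = (\<Prod>i<2*r. cmod (if i < r then \<sigma> (t i) else cnj (\<sigma> (t i))))"
      unfolding cf_def by (simp add: prod_norm)
    also have "\<dots> \<le> 1" by (rule prod_le_1) (use \<sigma> in auto)
    finally have c1: "cmod (cf t) \<le> 1" .
    have c2: "cmod (\<Sum>x\<in>vecs q n. character q n (wt t) x)
        \<le> (if t \<in> balanced_tuples q n r W then real (q ^ n) else 0)"
      using norm_sum_character_vecs[OF q, of n "wt t"] \<open>t \<in> ?T\<close>
      unfolding balanced_tuples_def wt_def by simp
    show "cmod (cf t) * cmod (\<Sum>x\<in>vecs q n. character q n (wt t) x)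
        \<le> (if t \<in> balanced_tuples q n r W then real (q ^ n) else 0)"
      using mult_mono[OF c1 c2] by simp
  qed
  also have "\<dots> = (\<Sum>t\<in>?T \<inter> balanced_tuples q n r W. real (q ^ n))"
    by (rule sum.inter_restrict[symmetric]) (simp add: W finite_PiE)
  also have "?T \<inter> balanced_tuples q n r W = balanced_tuples q n r W"
    by (auto simp: balanced_tuples_def)
  finally show ?thesis by (simp add: mult.commute)
qed

text \<open>Weighting by the phases of the Fourier coefficients turns their l1-mass on W into
  an average over B of a trigonometric polynomial, whose 2r-th moment is controlled above.\<close>

lemma fourier_mass_power_le:
  assumes q: "2 \<le> q" and B: "B \<subseteq> vecs q n" "B \<noteq> {}" and W: "finite W"
  shows "(\<Sum>u\<in>W. real (q ^ n) / real (card B) * cmod (fourier q n (indic_set B) u)) ^ (2*r)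
    \<le> real (q ^ n) / real (card B) * real (card (balanced_tuples q n r W))"
proof -
  define G where "G u = (\<Sum>x\<in>B. character q n (\<lambda>j. - int (u j)) x)" for u
  define \<sigma> where "\<sigma> u = cnj (sgn (G u))" for u
  define P where "P x = (\<Sum>u\<in>W. \<sigma> u * character q n (\<lambda>j. - int (u j)) x)" for x
  have fB: "finite B" using B(1) by (rule finite_subset) simp
  have cB: "0 < real (card B)" using fB B(2) by (simp add: card_gt_0_iff)
  have eq: "real (q ^ n) / real (card B) * cmod (fourier q n (indic_set B) u) = cmod (G u) / real (card B)"
    for u using q B(1) by (simp add: fourier_indic_set G_def norm_divide norm_power)
  have mass: "(\<Sum>u\<in>W. real (q ^ n) / real (card B) * cmod (fourier q n (indic_set B) u))
      = (\<Sum>u\<in>W. cmod (G u)) / real (card B)"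
    by (simp only: eq sum_divide_distrib)
  have "complex_of_real (\<Sum>u\<in>W. cmod (G u)) = (\<Sum>u\<in>W. \<sigma> u * G u)"
    by (simp add: cmod_eq_cnj_sgn_mult \<sigma>_def)
  also have "\<dots> = (\<Sum>u\<in>W. \<Sum>x\<in>B. \<sigma> u * character q n (\<lambda>j. - int (u j)) x)"
    unfolding G_def by (simp add: sum_distrib_left)
  also have "\<dots> = (\<Sum>x\<in>B. P x)"
    unfolding P_def by (rule sum.swap)
  moreover have "0 \<le> (\<Sum>u\<in>W. cmod (G u))" by (simp add: sum_nonneg)
  ultimately have "(\<Sum>u\<in>W. cmod (G u)) = cmod (\<Sum>x\<in>B. P x)"
    by (metis norm_of_real abs_of_nonneg)
  then have GP: "(\<Sum>u\<in>W. cmod (G u)) \<le> (\<Sum>x\<in>B. cmod (P x))"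
    by (simp add: norm_sum)
  have "(\<Sum>u\<in>W. real (q ^ n) / real (card B) * cmod (fourier q n (indic_set B) u)) ^ (2*r)
      \<le> ((\<Sum>x\<in>B. cmod (P x)) / real (card B)) ^ (2*r)"
    unfolding mass using GP cB by (intro power_mono divide_right_mono) (auto intro!: sum_nonneg divide_nonneg_nonneg)
  also have "\<dots> \<le> (\<Sum>x\<in>B. cmod (P x) ^ (2*r)) / real (card B)"
    by (rule power_mean_le_mean_power[OF fB B(2)]) simp
  also have "\<dots> \<le> (\<Sum>x\<in>vecs q n. cmod (P x) ^ (2*r)) / real (card B)"
    using B(1) by (intro divide_right_mono sum_mono2) auto
  also have "\<dots> \<le> real (q ^ n) * real (card (balanced_tuples q n r W)) / real (card B)"
    unfolding P_def using q W
    by (intro divide_right_mono sum_norm_power_le_card_balanced_tuples) (auto simp: \<sigma>_def norm_sgn)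
  finally show ?thesis by simp
qed

section \<open>Counting balanced tuples\<close>

lemma two_mul_card_UN_le_sum_card:
  assumes fI: "finite I" and fA: "\<And>i. i \<in> I \<Longrightarrow> finite (A i)"
    and two: "\<And>x. x \<in> (\<Union>i\<in>I. A i) \<Longrightarrow> \<exists>i1\<in>I. \<exists>i2\<in>I. i1 \<noteq> i2 \<and> x \<in> A i1 \<and> x \<in> A i2"
  shows "2 * card (\<Union>i\<in>I. A i) \<le> (\<Sum>i\<in>I. card (A i))"
proof -
  let ?U = "\<Union>i\<in>I. A i"
  have fU: "finite ?U" using fI fA by blast
  have "(\<Sum>i\<in>I. card (A i)) = (\<Sum>i\<in>I. \<Sum>x\<in>?U. if x \<in> A i then 1 else 0)"
  proof (rule sum.cong[OF refl])
    fix i assume i: "i \<in> I"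
    have sub: "A i \<subseteq> ?U" using i by blast
    have "(\<Sum>x\<in>?U. if x \<in> A i then 1 else (0::nat)) = (\<Sum>x\<in>?U \<inter> A i. 1)"
      using sum.inter_restrict[OF fU, of "\<lambda>_. 1::nat" "A i"] by simp
    also have "?U \<inter> A i = A i" using sub by blast
    finally show "card (A i) = (\<Sum>x\<in>?U. if x \<in> A i then 1 else 0)" by simp
  qed
  also have "\<dots> = (\<Sum>x\<in>?U. \<Sum>i\<in>I. if x \<in> A i then 1 else 0)"
    by (rule sum.swap)
  also have "\<dots> = (\<Sum>x\<in>?U. card {i\<in>I. x \<in> A i})"
  proof (rule sum.cong[OF refl])
    fix x
    have "(\<Sum>i\<in>I. if x \<in> A i then 1 else (0::nat)) = (\<Sum>i\<in>I \<inter> {i. x \<in> A i}. 1)"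
      using sum.inter_restrict[OF fI, of "\<lambda>_. 1::nat" "{i. x \<in> A i}"] by simp
    also have "I \<inter> {i. x \<in> A i} = {i\<in>I. x \<in> A i}" by blast
    finally show "(\<Sum>i\<in>I. if x \<in> A i then 1 else 0) = card {i\<in>I. x \<in> A i}" by simp
  qed
  also have "\<dots> \<ge> (\<Sum>x\<in>?U. 2)"
  proof (rule sum_mono)
    fix x assume x: "x \<in> ?U"
    obtain i1 i2 where "i1 \<in> I" "i2 \<in> I" "i1 \<noteq> i2" "x \<in> A i1" "x \<in> A i2" using two[OF x] by blast
    then have "{i1, i2} \<subseteq> {i\<in>I. x \<in> A i}" by blast
    moreover have "finite {i\<in>I. x \<in> A i}" using fI by simp
    ultimately have "card {i1, i2} \<le> card {i\<in>I. x \<in> A i}" by (rule card_mono[rotated])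
    then show "2 \<le> card {i\<in>I. x \<in> A i}" using \<open>i1 \<noteq> i2\<close> by simp
  qed
  finally show ?thesis by (simp add: mult.commute)
qed

lemma card_subsets_card_le:
  assumes "finite S"
  shows "card {D. D \<subseteq> S \<and> card D \<le> d} \<le> (card S + d) choose d"
proof -
  have "{D. D \<subseteq> S \<and> card D \<le> d} = (\<Union>j\<in>{..d}. {D. D \<subseteq> S \<and> card D = j})" by auto
  then have "card {D. D \<subseteq> S \<and> card D \<le> d} \<le> (\<Sum>j\<le>d. card {D. D \<subseteq> S \<and> card D = j})"
    using card_UN_le[of "{..d}" "\<lambda>j. {D. D \<subseteq> S \<and> card D = j}"] by simp
  also have "\<dots> = (\<Sum>j\<le>d. card S choose j)" using n_subsets[OF assms] by simp
  also have "\<dots> \<le> (\<Sum>j\<le>d. (card S choose j) * (d choose (d - j)))"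
    by (intro sum_mono) (simp add: Suc_le_eq zero_less_binomial_iff)
  also have "\<dots> = (card S + d) choose d" by (rule vandermonde)
  finally show ?thesis .
qed

lemma sum_sign_half: "(\<Sum>i<2*r. sign_half r i) = 0"
proof -
  have split: "{..<2*r} = {..<r} \<union> {r..<2*r}" by auto
  have "(\<Sum>i<2*r. sign_half r i) = (\<Sum>i<r. sign_half r i) + (\<Sum>i\<in>{r..<2*r}. sign_half r i)"
    unfolding split by (rule sum.union_disjoint) auto
  also have "(\<Sum>i<r. sign_half r i) = (\<Sum>i<r. -1)" by (rule sum.cong) (auto simp: sign_half_def)
  also have "(\<Sum>i\<in>{r..<2*r}. sign_half r i) = (\<Sum>i\<in>{r..<2*r}. 1)" by (rule sum.cong) (auto simp: sign_half_def)
  finally show ?thesis by simp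
qed

text \<open>Since the signs sum to zero, a balanced signed sum is unchanged by shifting all terms by c.\<close>

lemma dvd_shifted_term_of_balanced_sum:
  fixes a :: "nat \<Rightarrow> int"
  assumes sum: "d dvd (\<Sum>i<2*r. sign_half r i * a i)" and i0: "i0 < 2*r"
    and others: "\<And>i. i < 2*r \<Longrightarrow> i \<noteq> i0 \<Longrightarrow> d dvd a i + c"
  shows "d dvd a i0 + c"
proof -
  have "(\<Sum>i<2*r. sign_half r i * a i) = (\<Sum>i<2*r. sign_half r i * (a i + c))"
    using sum_sign_half[of r] by (simp add: distrib_left sum.distrib flip: sum_distrib_right)
  also have "\<dots> = sign_half r i0 * (a i0 + c) + (\<Sum>i\<in>{..<2*r} - {i0}. sign_half r i * (a i + c))"
    using i0 by (simp add: sum.remove)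
  finally have "d dvd sign_half r i0 * (a i0 + c) + (\<Sum>i\<in>{..<2*r} - {i0}. sign_half r i * (a i + c))"
    using sum by simp
  moreover have "d dvd (\<Sum>i\<in>{..<2*r} - {i0}. sign_half r i * (a i + c))"
    using others by (intro dvd_sum) auto
  ultimately have "d dvd sign_half r i0 * (a i0 + c)"
    by (simp add: dvd_add_left_iff)
  then show ?thesis by (metis dvd_minus_iff mult_1 mult_minus1 sign_half_def)
qed

text \<open>An edge
  whose v-sum is nonzero mod q (a charged edge) meets the support of u + v in at least one
  coordinate, any other edge in none or at least two.\<close>

locale sphere_count =
  fixes q n k :: nat and M :: "nat list list" and v :: "nat \<Rightarrow> nat" and h :: nat
  assumes q: "2 \<le> q" and hm: "hypermatching k n M" and v: "v \<in> vecs q n"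
begin

definition admissible :: "(nat \<Rightarrow> nat) set" where
  "admissible = {u \<in> vecs q n. (\<forall>j<n. \<not> covered M j \<longrightarrow> u j = 0) \<and>
     (\<forall>i<length M. (\<Sum>j\<in>set (M ! i). u j) mod q = 0)}"

definition sphere :: "(nat \<Rightarrow> nat) set" where
  "sphere = {u \<in> admissible. hweight n (vadd q u v) = h}"

definition active_coords :: "(nat \<Rightarrow> nat) \<Rightarrow> nat \<Rightarrow> nat set" where
  "active_coords u i = {j \<in> set (M ! i). (u j + v j) mod q \<noteq> 0}"

definition charged_edges :: "nat set" where
  "charged_edges = {i. i < length M \<and> (\<Sum>j\<in>set (M ! i). v j) mod q \<noteq> 0}"

definition neutral_active_edges :: "(nat \<Rightarrow> nat) \<Rightarrow> nat set" where
  "neutral_active_edges u = {i. i < length M \<and> i \<notin> charged_edges \<and> active_coords u i \<noteq> {}}"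

lemma finite_active_coords [simp]: "finite (active_coords u i)"
  unfolding active_coords_def by simp

lemma finite_charged_edges [simp]: "finite charged_edges"
  unfolding charged_edges_def by simp

lemma finite_neutral_active_edges [simp]: "finite (neutral_active_edges u)"
  unfolding neutral_active_edges_def by simp

lemma finite_sphere [simp]: "finite sphere"
  by (rule finite_subset[of _ "vecs q n"]) (auto simp: sphere_def admissible_def)

lemma sum_active_coords_mod:
  assumes "u \<in> admissible" "i < length M"
  shows "(\<Sum>j\<in>active_coords u i. (u j + v j) mod q) mod q = (\<Sum>j\<in>set (M ! i). v j) mod q"
proof -
  have "(\<Sum>j\<in>active_coords u i. (u j + v j) mod q) = (\<Sum>j\<in>set (M ! i). (u j + v j) mod q)"
    unfolding active_coords_def by (rule sum.mono_neutral_left) auto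
  then have "(\<Sum>j\<in>active_coords u i. (u j + v j) mod q) mod q
      = ((\<Sum>j\<in>set (M ! i). u j) + (\<Sum>j\<in>set (M ! i). v j)) mod q"
    by (simp add: mod_sum_eq sum.distrib)
  also have "\<dots> = (\<Sum>j\<in>set (M ! i). v j) mod q"
    using assms unfolding admissible_def by (simp add: mod_add_left_eq[symmetric])
  finally show ?thesis .
qed

lemma active_coords_nonempty_if_charged:
  "u \<in> admissible \<Longrightarrow> i \<in> charged_edges \<Longrightarrow> active_coords u i \<noteq> {}"
  using sum_active_coords_mod[of u i] by (auto simp: charged_edges_def)

lemma two_le_card_active_coords:
  assumes u: "u \<in> admissible" and i: "i \<in> neutral_active_edges u"
  shows "2 \<le> card (active_coords u i)"
proof (rule ccontr)
  assume "\<not> 2 \<le> card (active_coords u i)"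
  moreover have "active_coords u i \<noteq> {}" using i by (simp add: neutral_active_edges_def)
  ultimately obtain j where j: "active_coords u i = {j}"
    by (metis One_nat_def card_0_eq card_1_singletonE finite_active_coords less_2_cases not_le)
  have "(u j + v j) mod q = (\<Sum>j\<in>set (M ! i). v j) mod q"
    using sum_active_coords_mod[OF u, of i] i j by (simp add: neutral_active_edges_def)
  also have "\<dots> = 0" using i by (simp add: neutral_active_edges_def charged_edges_def)
  finally have "(u j + v j) mod q = 0" .
  moreover have "j \<in> active_coords u i" using j by simp
  ultimately show False by (simp add: active_coords_def)
qed

lemma sum_card_active_coords_le:
  "(\<Sum>i<length M. card (active_coords u i)) \<le> hweight n (vadd q u v)"
proof -
  have "(\<Sum>i<length M. card (active_coords u i)) = card (\<Union>i<length M. active_coords u i)"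
    using hypermatching_disjoint[OF hm] unfolding active_coords_def
    by (intro card_UN_disjoint[symmetric]) auto
  also have "\<dots> \<le> card {j. j < n \<and> vadd q u v j \<noteq> 0}"
    using hypermatching_edge[OF hm] unfolding active_coords_def vadd_def
    by (intro card_mono) auto
  finally show ?thesis unfolding hweight_def .
qed

lemma card_charged_edges_add_neutral_active_le:
  assumes u: "u \<in> sphere"
  shows "card charged_edges + 2 * card (neutral_active_edges u) \<le> h"
proof -
  have ua: "u \<in> admissible" using u by (simp add: sphere_def)
  have disj: "charged_edges \<inter> neutral_active_edges u = {}"
    by (auto simp: neutral_active_edges_def)
  have "card charged_edges = (\<Sum>i\<in>charged_edges. 1)" by simp
  also have "\<dots> \<le> (\<Sum>i\<in>charged_edges. card (active_coords u i))"
    using active_coords_nonempty_if_charged[OF ua] by (intro sum_mono) (simp add: Suc_le_eq card_gt_0_iff)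
  finally have charged: "card charged_edges \<le> (\<Sum>i\<in>charged_edges. card (active_coords u i))" .
  have "2 * card (neutral_active_edges u) = (\<Sum>i\<in>neutral_active_edges u. 2)" by simp
  also have "\<dots> \<le> (\<Sum>i\<in>neutral_active_edges u. card (active_coords u i))"
    by (intro sum_mono two_le_card_active_coords[OF ua])
  finally have "card charged_edges + 2 * card (neutral_active_edges u)
      \<le> (\<Sum>i\<in>charged_edges. card (active_coords u i)) + (\<Sum>i\<in>neutral_active_edges u. card (active_coords u i))"
    using charged by linarith
  also have "\<dots> = (\<Sum>i\<in>charged_edges \<union> neutral_active_edges u. card (active_coords u i))"
    using disj by (simp add: sum.union_disjoint)
  also have "\<dots> \<le> (\<Sum>i<length M. card (active_coords u i))"
    by (rule sum_mono2) (auto simp: charged_edges_def neutral_active_edges_def)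
  also have "\<dots> \<le> hweight n (vadd q u v)" by (rule sum_card_active_coords_le)
  also have "\<dots> = h" using u by (simp add: sphere_def)
  finally show ?thesis .
qed

lemma card_neutral_active_edges_le: "u \<in> sphere \<Longrightarrow> card (neutral_active_edges u) \<le> h div 2"
  using card_charged_edges_add_neutral_active_le by fastforce

lemma admissible_eq_outside_active:
  assumes u: "u \<in> admissible" "u' \<in> admissible" and j: "j < n"
    and inactive: "\<And>i. i < length M \<Longrightarrow> j \<in> set (M ! i) \<Longrightarrow> active_coords u i = {} \<and> active_coords u' i = {}"
  shows "u j = u' j"
proof (cases "covered M j")
  case True
  then obtain i where i: "i < length M" "j \<in> set (M ! i)" unfolding covered_def by blast
  then have "(u j + v j) mod q = (u' j + v j) mod q"
    using inactive[OF i] unfolding active_coords_def by auto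
  moreover have "u j < q" "u' j < q" using u j by (auto simp: admissible_def vecs_def)
  ultimately show ?thesis using mod_add_right_cancel_less by metis
qed (use u j in \<open>auto simp: admissible_def\<close>)

lemma inj_on_restrict_sphere_fiber:
  assumes J: "\<And>i. i \<in> charged_edges \<union> D \<Longrightarrow> set (M ! i) \<subseteq> J"
  shows "inj_on (\<lambda>u. restrict u J) {u \<in> sphere. neutral_active_edges u = D}"
proof (rule inj_onI)
  fix u u' assume u: "u \<in> {u \<in> sphere. neutral_active_edges u = D}" "u' \<in> {u \<in> sphere. neutral_active_edges u = D}"
    and eq: "restrict u J = restrict u' J"
  have ua: "u \<in> admissible" "u' \<in> admissible" using u by (auto simp: sphere_def)
  show "u = u'"
  proof
    fix j
    show "u j = u' j"
    proof (cases "j \<in> J")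
      case True then show ?thesis using eq by (metis restrict_apply')
    next
      case False
      have inactive: "active_coords u i = {} \<and> active_coords u' i = {}"
        if "i < length M" "j \<in> set (M ! i)" for i
      proof -
        have "i \<notin> charged_edges \<union> D" using False that(2) J by blast
        then show ?thesis using u that(1) unfolding neutral_active_edges_def by auto
      qed
      show ?thesis
      proof (cases "j < n")
        case True
        then show ?thesis using admissible_eq_outside_active[OF ua True] inactive by blast
      qed (use ua in \<open>simp add: admissible_def vecs_def\<close>)
    qed
  qed
qed

lemma card_sphere_fiber_le: "card {u \<in> sphere. neutral_active_edges u = D} \<le> q ^ (k * h)"
proof (cases "{u \<in> sphere. neutral_active_edges u = D} = {}")
  case False
  then obtain u0 where u0: "u0 \<in> sphere" "neutral_active_edges u0 = D" by blast
  define J where "J = (\<Union>i\<in>charged_edges \<union> D. set (M ! i))"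
  have ED: "charged_edges \<union> D \<subseteq> {..<length M}"
    using u0(2) unfolding charged_edges_def neutral_active_edges_def by auto
  have "card charged_edges + 2 * card D \<le> h"
    using card_charged_edges_add_neutral_active_le[OF u0(1)] u0(2) by simp
  then have cED: "card (charged_edges \<union> D) \<le> h"
    using card_Un_le[of charged_edges D] by linarith
  have edge: "card (set (M ! i)) = k" if "i \<in> charged_edges \<union> D" for i
    using hypermatching_edge[OF hm] ED that by (auto simp: distinct_card)
  have "card J \<le> (\<Sum>i\<in>charged_edges \<union> D. card (set (M ! i)))"
    unfolding J_def by (rule card_UN_le) (rule finite_subset[OF ED], simp)
  also have "\<dots> = k * card (charged_edges \<union> D)" using edge by simp
  also have "\<dots> \<le> k * h" using cED by simp
  finally have cJ: "card J \<le> k * h" .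
  have J: "J \<subseteq> {..<n}" "finite J"
    using ED hypermatching_edge[OF hm] unfolding J_def by (auto intro: finite_subset)
  have "inj_on (\<lambda>u. restrict u J) {u \<in> sphere. neutral_active_edges u = D}"
    by (rule inj_on_restrict_sphere_fiber) (auto simp: J_def)
  moreover have "(\<lambda>u. restrict u J) ` {u \<in> sphere. neutral_active_edges u = D} \<subseteq> PiE J (\<lambda>_. {..<q})"
    using J(1) by (auto simp: sphere_def admissible_def vecs_def)
  ultimately have "card {u \<in> sphere. neutral_active_edges u = D} \<le> card (PiE J (\<lambda>_. {..<q}))"
    by (rule card_inj_on_le) (simp add: J(2) finite_PiE)
  also have "\<dots> = q ^ card J" using J(2) by (simp add: card_PiE)
  also have "\<dots> \<le> q ^ (k * h)" using cJ q by (simp add: power_increasing)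
  finally show ?thesis .
qed (metis card.empty zero_le)

lemma neutral_active_edge_shared:
  assumes t: "t \<in> balanced_tuples q n r sphere" and i0: "i0 < 2*r"
    and l: "l \<in> neutral_active_edges (t i0)"
  shows "\<exists>i1<2*r. i1 \<noteq> i0 \<and> l \<in> neutral_active_edges (t i1)"
proof (rule ccontr)
  assume "\<not> ?thesis"
  then have inactive: "active_coords (t i) l = {}" if "i < 2*r" "i \<noteq> i0" for i
    using l that by (auto simp: neutral_active_edges_def)
  have "int q dvd int (t i0 j) + int (v j)" if j: "j \<in> set (M ! l)" for j
  proof (rule dvd_shifted_term_of_balanced_sum[OF _ i0])
    have "j < n" using hypermatching_edge[OF hm] j l by (auto simp: neutral_active_edges_def)
    then show "int q dvd (\<Sum>i<2*r. sign_half r i * int (t i j))"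
      using t by (simp add: balanced_tuples_def)
  next
    fix i assume "i < 2*r" "i \<noteq> i0"
    then have "(t i j + v j) mod q = 0" using inactive j by (auto simp: active_coords_def)
    then show "int q dvd int (t i j) + int (v j)"
      by (metis dvd_eq_mod_eq_0 of_nat_add of_nat_dvd_iff)
  qed
  then have "q dvd t i0 j + v j" if "j \<in> set (M ! l)" for j
    using that by (metis of_nat_add of_nat_dvd_iff)
  then have "active_coords (t i0) l = {}"
    unfolding active_coords_def by (auto simp: dvd_eq_mod_eq_0)
  then show False using l by (simp add: neutral_active_edges_def)
qed

text \<open>Double counting: every edge of the union is neutral active for two members, and each
  member has at most h div 2 neutral active edges.\<close>

lemma card_UN_neutral_active_edges_le:
  assumes t: "t \<in> balanced_tuples q n r sphere"
  shows "card (\<Union>i<2*r. neutral_active_edges (t i)) \<le> r * (h div 2)"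
proof -
  have tS: "t i \<in> sphere" if "i < 2*r" for i
    using t that by (auto simp: balanced_tuples_def)
  have "2 * card (\<Union>i<2*r. neutral_active_edges (t i)) \<le> (\<Sum>i<2*r. card (neutral_active_edges (t i)))"
  proof (rule two_mul_card_UN_le_sum_card)
    fix l assume "l \<in> (\<Union>i\<in>{..<2*r}. neutral_active_edges (t i))"
    then obtain i0 where "i0 < 2*r" "l \<in> neutral_active_edges (t i0)" by auto
    then show "\<exists>i1\<in>{..<2*r}. \<exists>i2\<in>{..<2*r}. i1 \<noteq> i2 \<and> l \<in> neutral_active_edges (t i1) \<and> l \<in> neutral_active_edges (t i2)"
      using neutral_active_edge_shared[OF t] by blast
  qed simp_all
  also have "\<dots> \<le> (\<Sum>i<2*r. h div 2)"
    using tS card_neutral_active_edges_le by (intro sum_mono) simp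
  finally show ?thesis by simp
qed

lemma card_sphere_within_le:
  assumes "finite S"
  shows "card {u \<in> sphere. neutral_active_edges u \<subseteq> S} \<le> ((card S + h div 2) choose (h div 2)) * q ^ (k * h)"
proof -
  let ?DD = "{D. D \<subseteq> S \<and> card D \<le> h div 2}"
  have fDD: "finite ?DD" using assms by simp
  have "{u \<in> sphere. neutral_active_edges u \<subseteq> S} \<subseteq> (\<Union>D\<in>?DD. {u \<in> sphere. neutral_active_edges u = D})"
    using card_neutral_active_edges_le by auto
  then have "card {u \<in> sphere. neutral_active_edges u \<subseteq> S} \<le> card (\<Union>D\<in>?DD. {u \<in> sphere. neutral_active_edges u = D})"
    by (rule card_mono[rotated]) (simp add: fDD)
  also have "\<dots> \<le> (\<Sum>D\<in>?DD. card {u \<in> sphere. neutral_active_edges u = D})"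
    by (rule card_UN_le[OF fDD])
  also have "\<dots> \<le> card ?DD * q ^ (k * h)"
    using sum_mono[of ?DD _ "\<lambda>_. q ^ (k * h)", OF card_sphere_fiber_le] by simp
  also have "\<dots> \<le> ((card S + h div 2) choose (h div 2)) * q ^ (k * h)"
    using card_subsets_card_le[OF assms] by simp
  finally show ?thesis .
qed

text \<open>A balanced tuple is a tuple of members of the sphere whose neutral active edges lie in one
  set S of at most r (h div 2) edges.\<close>

lemma card_balanced_tuples_sphere_le:
  defines "d \<equiv> h div 2"
  shows "card (balanced_tuples q n r sphere)
    \<le> ((length M + r * d) choose (r * d)) * (((r * d + d) choose d) * q ^ (k * h)) ^ (2*r)"
proof -
  let ?SS = "{S. S \<subseteq> {..<length M} \<and> card S \<le> r * d}"
  let ?within = "\<lambda>S. {u \<in> sphere. neutral_active_edges u \<subseteq> S}"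
  have fSS: "finite ?SS" by simp
  have "balanced_tuples q n r sphere \<subseteq> (\<Union>S\<in>?SS. PiE {..<2*r} (\<lambda>_. ?within S))"
  proof
    fix t assume t: "t \<in> balanced_tuples q n r sphere"
    let ?S = "\<Union>i<2*r. neutral_active_edges (t i)"
    have "?S \<in> ?SS"
      using card_UN_neutral_active_edges_le[OF t] by (auto simp: d_def neutral_active_edges_def)
    moreover have "t \<in> PiE {..<2*r} (\<lambda>_. ?within ?S)"
      using t by (auto simp: balanced_tuples_def PiE_def Pi_def)
    ultimately show "t \<in> (\<Union>S\<in>?SS. PiE {..<2*r} (\<lambda>_. ?within S))" by blast
  qed
  then have "card (balanced_tuples q n r sphere) \<le> card (\<Union>S\<in>?SS. PiE {..<2*r} (\<lambda>_. ?within S))"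
    by (rule card_mono[rotated]) (simp add: finite_PiE)
  also have "\<dots> \<le> (\<Sum>S\<in>?SS. card (?within S) ^ (2*r))"
    using card_UN_le[OF fSS, of "\<lambda>S. PiE {..<2*r} (\<lambda>_. ?within S)"] by (simp add: card_PiE)
  also have "\<dots> \<le> (\<Sum>S\<in>?SS. (((r * d + d) choose d) * q ^ (k * h)) ^ (2*r))"
  proof (intro sum_mono power_mono)
    fix S assume S: "S \<in> ?SS"
    then have "finite S" using finite_subset by blast
    then have "card (?within S) \<le> ((card S + d) choose d) * q ^ (k * h)"
      unfolding d_def by (rule card_sphere_within_le)
    also have "\<dots> \<le> ((r * d + d) choose d) * q ^ (k * h)"
      using S by (intro mult_right_mono binomial_right_mono) auto
    finally show "card (?within S) \<le> ((r * d + d) choose d) * q ^ (k * h)" .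
  qed simp
  also have "\<dots> \<le> ((length M + r * d) choose (r * d)) * (((r * d + d) choose d) * q ^ (k * h)) ^ (2*r)"
    using card_subsets_card_le[of "{..<length M}" "r * d"] by simp
  finally show ?thesis .
qed

end

section \<open>Numerical estimates\<close>

lemma power_div_exp_le_fact: "(real j / exp 1) ^ j \<le> fact j"
proof -
  have "summable (\<lambda>i. real j ^ i / fact i)" and "(\<Sum>i. real j ^ i / fact i) = exp (real j)"
    using exp_converges[of "real j"] by (simp_all add: sums_iff divide_inverse mult.commute)
  then have "real j ^ j / fact j \<le> exp (real j)"
    using sum_le_suminf[of "\<lambda>i. real j ^ i / fact i" "{j}"] by simp
  moreover have "exp (real j) = exp 1 ^ j" by (simp flip: exp_of_nat_mult)
  ultimately show ?thesis by (simp add: power_divide divide_le_eq mult.commute)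
qed

lemma power_div_fact_le:
  assumes "0 \<le> a"
  shows "a ^ j / fact j \<le> (exp 1 * a / real j) ^ j"
proof (cases "j = 0")
  case False
  then have "a ^ j / fact j \<le> a ^ j / (real j / exp 1) ^ j"
    using assms by (intro divide_left_mono power_div_exp_le_fact) auto
  then show ?thesis by (simp add: power_divide power_mult_distrib mult.commute)
qed simp

lemma binomial_le_exp_power: "real (a choose j) \<le> (exp 1 * real a / real j) ^ j"
proof -
  have "real (a choose j) * fact j \<le> real a ^ j"
    using binomial_fact_pow[of a j] by (metis of_nat_fact of_nat_le_iff of_nat_mult of_nat_power)
  then have "real (a choose j) \<le> real a ^ j / fact j" by (simp add: field_simps)
  also have "\<dots> \<le> (exp 1 * real a / real j) ^ j" by (rule power_div_fact_le) simp
  finally show ?thesis .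
qed

lemma binomial_mul_add_le:
  assumes "1 \<le> r" "1 \<le> d"
  shows "real ((r * d + d) choose d) \<le> (2 * exp 1 * real r) ^ d"
proof -
  have "real ((r * d + d) choose d) \<le> (exp 1 * real (r * d + d) / real d) ^ d"
    by (rule binomial_le_exp_power)
  also have "exp 1 * real (r * d + d) / real d = exp 1 * (real r + 1)"
    using assms(2) by (simp add: field_simps)
  also have "(exp 1 * (real r + 1)) ^ d \<le> (2 * exp 1 * real r) ^ d"
    using assms(1) by (intro power_mono) auto
  finally show ?thesis .
qed

lemma exists_multiple_in_interval:
  assumes "0 < h"
  obtains r :: nat where "b \<le> r * h" "r * h < b + h"
proof
  let ?r = "(b + h - 1) div h"
  have "?r * h + (b + h - 1) mod h = b + h - 1" by (rule div_mult_mod_eq)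
  moreover have "(b + h - 1) mod h < h" using assms by simp
  ultimately show "b \<le> ?r * h" "?r * h < b + h" using assms by linarith+
qed

lemma power_le_sqrt_power:
  fixes Z :: real
  assumes "1 \<le> Z" "2 * d \<le> e"
  shows "Z ^ d \<le> sqrt Z ^ e"
proof -
  have "Z ^ d = sqrt Z ^ (2 * d)" using assms(1) by (simp add: power_mult)
  also have "\<dots> \<le> sqrt Z ^ e" using assms by (intro power_increasing) auto
  finally show ?thesis .
qed

lemma binomial_bases_le:
  fixes h s n r d :: nat
  assumes r: "1 \<le> r" "r * h \<le> 2 * s" and d: "1 \<le> d" "h \<le> 3 * d" and h: "1 \<le> h"
  shows "2 * exp 1 * real n / real (r * d) * (2 * exp 1 * real r)\<^sup>2
    \<le> 48 * exp 1 ^ 3 * real s * real n / (real h)\<^sup>2"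
proof -
  define E :: real where "E = exp 1"
  have "real r * (real h)\<^sup>2 \<le> 6 * real s * real d"
  proof -
    have "real r * real h \<le> 2 * real s" using r by (metis of_nat_le_iff of_nat_mult of_nat_numeral)
    moreover have "real h \<le> 3 * real d" using d by (metis of_nat_le_iff of_nat_mult of_nat_numeral)
    ultimately have "(real r * real h) * real h \<le> (2 * real s) * (3 * real d)"
      by (rule mult_mono) auto
    then show ?thesis by (simp add: power2_eq_square algebra_simps)
  qed
  then have "8 * E ^ 3 * real n * (real r * (real h)\<^sup>2) \<le> 8 * E ^ 3 * real n * (6 * real s * real d)"
    by (intro mult_left_mono) (auto simp: E_def)
  then show ?thesis
    using r d h unfolding E_def[symmetric] by (simp add: field_simps power2_eq_square power3_eq_cube)
qed

text \<open>With d = h div 2 and r h \<le> 2 s, the two binomial factors of the count of balanced tuples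
  are at most (2 e n / (r d))^(r d) and (2 e r)^(2 r d); their product is bounded using
  r h^2 \<le> 6 s d.\<close>

lemma binomial_factors_le:
  fixes h s n m r :: nat
  assumes h: "1 \<le> h" "h \<le> s" and n: "s \<le> n" "m \<le> n" and r: "r * h \<le> 2 * s"
  defines "d \<equiv> h div 2"
  shows "real ((m + r * d) choose (r * d)) * real ((r * d + d) choose d) ^ (2*r)
    \<le> (48 * exp 1 ^ 3 * real s * real n / (real h)\<^sup>2) ^ (r * d)"
proof (cases "r * d = 0")
  case False
  define E :: real where "E = exp 1"
  have r1: "1 \<le> r" and d1: "1 \<le> d" using False by auto
  have "2 * (r * d) \<le> r * h" unfolding d_def by simp
  then have rds: "r * d \<le> s" using r by linarith
  have "real ((m + r * d) choose (r * d)) \<le> (E * real (m + r * d) / real (r * d)) ^ (r * d)"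
    unfolding E_def by (rule binomial_le_exp_power)
  also have "\<dots> \<le> (2 * E * real n / real (r * d)) ^ (r * d)"
  proof -
    have "m + r * d \<le> 2 * n" using n rds by linarith
    then have "real (m + r * d) \<le> 2 * real n" by (metis of_nat_le_iff of_nat_mult of_nat_numeral)
    then show ?thesis by (intro power_mono divide_right_mono) (auto simp: E_def)
  qed
  finally have C1: "real ((m + r * d) choose (r * d)) \<le> (2 * E * real n / real (r * d)) ^ (r * d)" .
  have "real ((r * d + d) choose d) ^ (2*r) \<le> ((2 * E * real r) ^ d) ^ (2*r)"
    using binomial_mul_add_le[OF r1 d1] by (intro power_mono) (simp_all add: E_def)
  also have "\<dots> = ((2 * E * real r)\<^sup>2) ^ (r * d)"
    by (simp flip: power_mult) (simp add: mult_ac)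
  finally have C2: "real ((r * d + d) choose d) ^ (2*r) \<le> ((2 * E * real r)\<^sup>2) ^ (r * d)" .
  have base: "2 * E * real n / real (r * d) * (2 * E * real r)\<^sup>2 \<le> 48 * E ^ 3 * real s * real n / (real h)\<^sup>2"
  proof -
    have "h \<le> 3 * d" using d1 unfolding d_def by presburger
    then show ?thesis unfolding E_def by (rule binomial_bases_le[OF r1 r d1 _ h(1)])
  qed
  have "real ((m + r * d) choose (r * d)) * real ((r * d + d) choose d) ^ (2*r)
      \<le> (2 * E * real n / real (r * d)) ^ (r * d) * ((2 * E * real r)\<^sup>2) ^ (r * d)"
    using C1 C2 by (intro mult_mono) auto
  also have "\<dots> = (2 * E * real n / real (r * d) * (2 * E * real r)\<^sup>2) ^ (r * d)"
    by (rule power_mult_distrib[symmetric])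
  also have "\<dots> \<le> (48 * E ^ 3 * real s * real n / (real h)\<^sup>2) ^ (r * d)"
    using base by (intro power_mono) (auto simp: E_def)
  finally show ?thesis unfolding E_def .
qed (auto simp: d_def)

lemma exp_cube_factor_bounds:
  fixes h s n :: nat
  assumes h: "1 \<le> h" "h \<le> s" and n: "s \<le> n"
  shows "1 \<le> 48 * exp 1 ^ 3 * real s * real n / (real h)\<^sup>2"
    and "sqrt (48 * exp 1 ^ 3 * real s * real n / (real h)\<^sup>2) \<le> 64 * sqrt (real s * real n) / real h"
proof -
  have "(real h)\<^sup>2 \<le> real s * real n" using h n by (simp add: power2_eq_square mult_mono)
  moreover have "1 \<le> exp (1::real) ^ 3" by (rule one_le_power) simp
  then have "1 \<le> 48 * exp (1::real) ^ 3" by linarith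
  ultimately have "(real h)\<^sup>2 \<le> 48 * exp 1 ^ 3 * (real s * real n)"
    by (smt (verit) mult_le_cancel_right1 mult_nonneg_nonneg of_nat_0_le_iff)
  then show "1 \<le> 48 * exp 1 ^ 3 * real s * real n / (real h)\<^sup>2" using h by (simp add: field_simps)
  have "sqrt (48 * exp 1 ^ 3 * real s * real n / (real h)\<^sup>2) = sqrt (48 * exp 1 ^ 3) * sqrt (real s * real n) / real h"
    by (simp add: real_sqrt_divide real_sqrt_mult mult.assoc)
  also have "\<dots> \<le> 64 * sqrt (real s * real n) / real h"
  proof -
    have "exp (1::real) ^ 3 \<le> 3 ^ 3" by (rule power_mono[OF exp_le]) simp
    then have "48 * exp (1::real) ^ 3 \<le> 64\<^sup>2" by simp
    then have "sqrt (48 * exp 1 ^ 3) \<le> sqrt (64\<^sup>2)" by (simp only: real_sqrt_le_iff)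
    then show ?thesis by (intro divide_right_mono mult_right_mono) auto
  qed
  finally show "sqrt (48 * exp 1 ^ 3 * real s * real n / (real h)\<^sup>2) \<le> 64 * sqrt (real s * real n) / real h" .
qed

lemma moment_count_le:
  fixes q k h s n m r b :: nat
  assumes q: "2 \<le> q" and h: "1 \<le> h" "h \<le> s" and n: "s \<le> n" "m \<le> n"
    and r: "b \<le> r * h" "r * h \<le> 2 * s"
  defines "d \<equiv> h div 2"
  shows "real q ^ b * (real ((m + r * d) choose (r * d)) * (real ((r * d + d) choose d) * real q ^ (k * h)) ^ (2*r))
    \<le> (64 * real q ^ (2*k+1) * sqrt (real s * real n) / real h) ^ (h * r)"
proof -
  define Z where "Z = 48 * exp 1 ^ 3 * real s * real n / (real h)\<^sup>2"
  have Z1: "1 \<le> Z" and sqZ: "sqrt Z \<le> 64 * sqrt (real s * real n) / real h"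
    unfolding Z_def using exp_cube_factor_bounds[OF h n(1)] by simp_all
  have "real q ^ b * (real ((m + r * d) choose (r * d)) * (real ((r * d + d) choose d) * real q ^ (k * h)) ^ (2*r))
      = real q ^ b * real q ^ (2 * k * (r * h)) *
        (real ((m + r * d) choose (r * d)) * real ((r * d + d) choose d) ^ (2*r))"
    by (simp add: power_mult_distrib flip: power_mult) (simp add: mult_ac)
  also have "\<dots> \<le> real q ^ ((2*k+1) * (r * h)) * Z ^ (r * d)"
  proof (rule mult_mono)
    have "real q ^ b \<le> real q ^ (r * h)" using q r by (intro power_increasing) auto
    then show "real q ^ b * real q ^ (2 * k * (r * h)) \<le> real q ^ ((2*k+1) * (r * h))"
      by (simp add: power_add[symmetric] algebra_simps) (simp add: power_add mult_right_mono)
    show "real ((m + r * d) choose (r * d)) * real ((r * d + d) choose d) ^ (2*r) \<le> Z ^ (r * d)"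
      unfolding Z_def d_def using h n r by (intro binomial_factors_le) linarith+
  qed (use Z1 in auto)
  also have "\<dots> \<le> real q ^ ((2*k+1) * (r * h)) * sqrt Z ^ (r * h)"
    using Z1 by (intro mult_left_mono power_le_sqrt_power) (auto simp: d_def)
  also have "\<dots> = (real q ^ (2*k+1)) ^ (h * r) * sqrt Z ^ (h * r)"
    by (simp only: power_mult mult.commute[of r h])
  also have "\<dots> = (real q ^ (2*k+1) * sqrt Z) ^ (h * r)"
    by (rule power_mult_distrib[symmetric])
  also have "\<dots> \<le> (64 * real q ^ (2*k+1) * sqrt (real s * real n) / real h) ^ (h * r)"
  proof (rule power_mono)
    have "real q ^ (2*k+1) * sqrt Z \<le> real q ^ (2*k+1) * (64 * sqrt (real s * real n) / real h)"
      using sqZ by (rule mult_left_mono) simp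
    then show "real q ^ (2*k+1) * sqrt Z \<le> 64 * real q ^ (2*k+1) * sqrt (real s * real n) / real h"
      by (simp only: times_divide_eq_right mult_ac)
  qed (use Z1 in simp)
  finally show ?thesis .
qed

lemma le_powr_half_if_power_le:
  fixes L X :: real
  assumes "0 \<le> L" "0 < X" "0 < r" "L ^ (2*r) \<le> X ^ (h*r)"
  shows "L \<le> X powr (real h / 2)"
proof -
  have "(X powr (real h / 2)) ^ (2*r) = X powr (real (2*r) * (real h / 2))"
    using assms(2) by (simp add: powr_power)
  also have "real (2*r) * (real h / 2) = real (h*r)" by simp
  also have "X powr real (h*r) = X ^ (h*r)" using assms(2) by (rule powr_realpow)
  finally have "X ^ (h*r) = (X powr (real h / 2)) ^ (2*r)" ..
  then have "L ^ Suc (2*r - 1) \<le> (X powr (real h / 2)) ^ Suc (2*r - 1)"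
    using assms(3,4) by simp
  then show ?thesis by (rule power_le_imp_le_base) simp
qed

context sphere_count
begin

lemma fourier_eq_0_if_not_admissible:
  assumes "centers M c" "2 \<le> k" "restricted q k n M c B" "B \<subseteq> vecs q n"
    and "u \<in> vecs q n" "u \<notin> admissible"
  shows "fourier q n (indic_set B) u = 0"
proof -
  consider j where "j < n" "u j \<noteq> 0" "\<not> covered M j"
    | i where "i < length M" "(\<Sum>j\<in>set (M ! i). u j) mod q \<noteq> 0"
    using assms(5,6) unfolding admissible_def by blast
  then show ?thesis
  proof cases
    case 1
    then show ?thesis by (rule fourier_uncovered_eq_0[OF q hm assms(1-5)])
  next
    case 2
    then show ?thesis by (rule fourier_edge_sum_eq_0[OF q hm assms(1-4)])
  qed
qed

lemma sphere_mass_power_le: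
  assumes B: "B \<subseteq> vecs q n" "q ^ (n - b) \<le> card B" and b: "b \<le> n"
  shows "(\<Sum>u\<in>sphere. real (q ^ n) / real (card B) * cmod (fourier q n (indic_set B) u)) ^ (2*r)
    \<le> real q ^ b * real (card (balanced_tuples q n r sphere))"
proof -
  have "0 < q ^ (n - b)" using q by simp
  then have cardB: "0 < real (card B)" using B(2) by (metis of_nat_0_less_iff order_less_le_trans)
  then have "B \<noteq> {}" by auto
  have qb: "real (q ^ n) / real (card B) \<le> real q ^ b"
  proof -
    have "real (q ^ n) = real (q ^ (n - b)) * real q ^ b" using b by (simp flip: power_add)
    also have "\<dots> \<le> real (card B) * real q ^ b" using B(2) by (intro mult_right_mono) auto
    finally show ?thesis using cardB by (simp add: divide_le_eq mult.commute)
  qed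
  have "(\<Sum>u\<in>sphere. real (q ^ n) / real (card B) * cmod (fourier q n (indic_set B) u)) ^ (2*r)
      \<le> real (q ^ n) / real (card B) * real (card (balanced_tuples q n r sphere))"
    by (rule fourier_mass_power_le[OF q B(1) \<open>B \<noteq> {}\<close> finite_sphere])
  also have "\<dots> \<le> real q ^ b * real (card (balanced_tuples q n r sphere))"
    using qb by (rule mult_right_mono) simp
  finally show ?thesis .
qed

lemma sphere_fourier_mass_le:
  assumes k: "2 \<le> k" and ce: "centers M c"
    and res: "restricted q k n M c B" and B: "B \<subseteq> vecs q n" "q ^ (n - b) \<le> card B"
    and b: "0 < b" "b \<le> s" and n: "s \<le> n" "length M \<le> n" and h: "h \<in> {1..s}"
  shows "(\<Sum>u\<in>{u\<in>vecs q n. hweight n (vadd q u v) = h}.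
            real (q ^ n) / real (card B) * cmod (fourier q n (indic_set B) u))
         \<le> Ubound q (64 * real q ^ (2*k+1)) s n h"
proof -
  let ?w = "\<lambda>u. real (q ^ n) / real (card B) * cmod (fourier q n (indic_set B) u)"
  define X where "X = 64 * real q ^ (2*k+1) * sqrt (real s * real n) / real h"
  define d where "d = h div 2"
  have h1: "1 \<le> h" and hs: "h \<le> s" using h by auto
  obtain r where r: "b \<le> r * h" "r * h < b + h"
    using exists_multiple_in_interval[of h b] h by auto
  have "0 < r" using r b by (cases r) auto
  have mass: "(\<Sum>u\<in>{u\<in>vecs q n. hweight n (vadd q u v) = h}. ?w u) = (\<Sum>u\<in>sphere. ?w u)"
  proof (rule sum.mono_neutral_right)
    show "sphere \<subseteq> {u\<in>vecs q n. hweight n (vadd q u v) = h}"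
      by (auto simp: sphere_def admissible_def)
    show "\<forall>u\<in>{u\<in>vecs q n. hweight n (vadd q u v) = h} - sphere. ?w u = 0"
      using fourier_eq_0_if_not_admissible[OF ce k res B(1)] by (auto simp: sphere_def)
  qed simp
  have "(\<Sum>u\<in>sphere. ?w u) ^ (2*r) \<le> real q ^ b * real (card (balanced_tuples q n r sphere))"
    using b n by (intro sphere_mass_power_le[OF B]) linarith
  also have "\<dots> \<le> real q ^ b * (real ((length M + r * d) choose (r * d)) *
      (real ((r * d + d) choose d) * real q ^ (k * h)) ^ (2*r))"
  proof (rule mult_left_mono)
    have "real (card (balanced_tuples q n r sphere))
        \<le> real (((length M + r * d) choose (r * d)) * (((r * d + d) choose d) * q ^ (k * h)) ^ (2*r))"
      using card_balanced_tuples_sphere_le[of r] unfolding d_def by (simp only: of_nat_le_iff)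
    then show "real (card (balanced_tuples q n r sphere)) \<le> real ((length M + r * d) choose (r * d)) *
        (real ((r * d + d) choose d) * real q ^ (k * h)) ^ (2*r)"
      by simp
  qed simp
  also have "\<dots> \<le> X ^ (h * r)"
    unfolding X_def d_def using hs r b by (intro moment_count_le[OF q h1 hs n]) linarith+
  finally have "(\<Sum>u\<in>sphere. ?w u) ^ (2*r) \<le> X ^ (h * r)" .
  moreover have "0 < X" using q h1 hs n(1) by (simp add: X_def)
  ultimately have "(\<Sum>u\<in>sphere. ?w u) \<le> X powr (real h / 2)"
    using \<open>0 < r\<close> by (intro le_powr_half_if_power_le) (simp_all add: sum_nonneg)
  moreover have "Ubound q (64 * real q ^ (2*k+1)) s n h = X powr (real h / 2)"
    using h1 hs by (simp add: Ubound_def X_def)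
  ultimately show ?thesis by (simp only: mass)
qed

end

lemma reduced_if_restricted_large:
  assumes "2 \<le> q" "2 \<le> k" "hypermatching k n M" "centers M c" "restricted q k n M c B"
    and "B \<subseteq> vecs q n" "q ^ (n - b) \<le> card B" "0 < b" "b \<le> s" "s \<le> n" "length M \<le> n"
  shows "reduced q n M (64 * real q ^ (2*k+1)) s B"
proof -
  have "fourier q n (indic_set B) u = 0" if "\<exists>j<n. u j \<noteq> 0 \<and> \<not> covered M j" "u \<in> vecs q n" for u
    using that fourier_uncovered_eq_0[OF assms(1,3,4,2,5,6)] by blast
  moreover have "fourier q n (indic_set B) u = 0"
    if "\<exists>i<length M. (\<Sum>j\<in>set (M ! i). u j) mod q \<noteq> 0" for u
    using that fourier_edge_sum_eq_0[OF assms(1,3,4,2,5,6)] by blast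
  moreover have "(\<Sum>u\<in>{u\<in>vecs q n. hweight n (vadd q u v) = h}.
            real (q ^ n) / real (card B) * cmod (fourier q n (indic_set B) u))
         \<le> Ubound q (64 * real q ^ (2*k+1)) s n h"
    if "h \<in> {1..s}" "v \<in> vecs q n" for h v
  proof -
    interpret sphere_count q n k M v h using assms(1,3) that(2) by unfold_locales
    show ?thesis using that(1) by (rule sphere_fourier_mass_le[OF assms(2,4-11)])
  qed
  ultimately show ?thesis unfolding reduced_def by blast
qed

theorem lemma5p7:
  fixes q k :: nat and \<alpha> :: real
  assumes "q \<ge> 2" and "k \<ge> 2" and "0 < \<alpha>" and "\<alpha> < 1 / real k"
  shows "\<exists>C > 0. \<exists>N. \<forall>n \<ge> N. \<forall>M b s B.
           hypermatching k n M \<longrightarrow> real (length M) \<le> \<alpha> * real n \<longrightarrow>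
           0 < b \<longrightarrow> b \<le> s \<longrightarrow> real s \<le> real n / 32 \<longrightarrow>
           B \<subseteq> vecs q n \<longrightarrow>
           (\<exists>c. centers M c \<and> restricted q k n M c B) \<longrightarrow>
           card B \<ge> q ^ (n - b) \<longrightarrow>
           reduced q n M C s B"
proof (intro exI[of _ "64 * real q ^ (2*k+1)"] conjI exI[of _ 0] allI impI)
  show "0 < 64 * real q ^ (2*k+1)" using assms(1) by simp
  fix n M b s B
  assume M: "hypermatching k n M" "real (length M) \<le> \<alpha> * real n"
    and b: "0 < b" "b \<le> s" and s: "real s \<le> real n / 32" and B: "B \<subseteq> vecs q n"
    and "\<exists>c. centers M c \<and> restricted q k n M c B" and card: "q ^ (n - b) \<le> card B"
  then obtain c where c: "centers M c" "restricted q k n M c B" by blast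
  have "1 / real k \<le> 1" using assms(2) by simp
  then have "\<alpha> \<le> 1" using assms(4) by linarith
  then have "\<alpha> * real n \<le> real n" using assms(3) by (intro mult_left_le_one_le) simp_all
  then have "length M \<le> n" using M(2) by simp
  moreover have "s \<le> n" using s by linarith
  ultimately show "reduced q n M (64 * real q ^ (2*k+1)) s B"
    using reduced_if_restricted_large[OF assms(1,2) M(1) c B card b] by blast
qed

end
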